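(* Let $\omega>0$, $c\in[0,1]$ and $H(q,p)=\frac12\omega^{-2}p^2+\frac12(\omega^2+1)q^2$. Let $\psi_h=\varphi^{(B)}_{h/2}\circ\varphi^{(A)}_h\circ\varphi^{(B)}_{h/2}$, where $\varphi^{(A)}_t$ is the flow of $\dot q=\omega^{-2}p,\ \dot p=-c^2\omega^2q$ and $\varphi^{(B)}_t$ the flow of $\dot q=0,\ \dot p=-((1-c^2)\omega^2+1)q$. If $h>0$ satisfies $$ch+2\arctan\!\Big(\frac{h(1+(1-c^2)\omega^2)}{2c\omega^2}\Big)<\pi\ \text{ if }c\in(0,1],\qquad h<\frac{2\omega}{\sqrt{1+\omega^2}}\ \text{ if }c=0,$$ then the integrator is stable (the powers of its one-step matrix are bounded). *)

theory Defs
  imports "HOL-Analysis.Analysis"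
begin

definition is_flow :: "(real \<Rightarrow> real \<times> real \<Rightarrow> real \<times> real) \<Rightarrow> (real \<times> real \<Rightarrow> real \<times> real) \<Rightarrow> bool" where
  "is_flow phi F \<longleftrightarrow>
     (\<forall>x. phi 0 x = x) \<and>
     (\<forall>x t. ((\<lambda>s. phi s x) has_vector_derivative F (phi t x)) (at t))"

definition field_A :: "real \<Rightarrow> real \<Rightarrow> real \<times> real \<Rightarrow> real \<times> real" where
  "field_A \<omega> c = (\<lambda>(q, p). (p / \<omega>\<^sup>2, - (c\<^sup>2 * \<omega>\<^sup>2) * q))"

definition field_B :: "real \<Rightarrow> real \<Rightarrow> real \<times> real \<Rightarrow> real \<times> real" where
  "field_B \<omega> c = (\<lambda>(q, p). (0, - ((1 - c\<^sup>2) * \<omega>\<^sup>2 + 1) * q))"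

definition strang :: "(real \<Rightarrow> real \<times> real \<Rightarrow> real \<times> real) \<Rightarrow> (real \<Rightarrow> real \<times> real \<Rightarrow> real \<times> real)
    \<Rightarrow> real \<Rightarrow> real \<times> real \<Rightarrow> real \<times> real" where
  "strang phiA phiB h = phiB (h/2) \<circ> phiA h \<circ> phiB (h/2)"

definition stable_map :: "(real \<times> real \<Rightarrow> real \<times> real) \<Rightarrow> bool" where
  "stable_map psi \<longleftrightarrow> (\<exists>C. \<forall>n x. norm ((psi ^^ n) x) \<le> C * norm x)"

end

theory Submission
  imports Defs
begin

text \<open>Both partial flows are linear, and the explicit solutions are the only ones (an energy
  argument), so the Strang step is a kick-drift-kick product of 2x2 matrices of determinant one.
  Its trace is 2 cos (c h) - h k sin (c h) / (c \<omega>^2) with k = (1 - c^2) \<omega>^2 + 1, or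
  2 - h^2 (1 + \<omega>^2) / \<omega>^2 when c = 0, and the step-size condition says exactly that this trace
  lies in (-2, 2). A unimodular matrix with such a trace preserves a definite quadratic form, which
  bounds all its powers.\<close>

definition mat2 :: "real \<Rightarrow> real \<Rightarrow> real \<Rightarrow> real \<Rightarrow> real \<times> real \<Rightarrow> real \<times> real" where
  "mat2 a b c d = (\<lambda>(x, y). (a * x + b * y, c * x + d * y))"

lemma mat2_comp:
  "mat2 a b c d \<circ> mat2 a' b' c' d' =
     mat2 (a * a' + b * c') (a * b' + b * d') (c * a' + d * c') (c * b' + d * d')"
  by (rule ext) (auto simp: mat2_def algebra_simps)

lemma quadratic_form_lower_bound:
  fixes \<alpha> \<beta> \<gamma> x y :: real
  assumes "\<alpha> > 0" and "\<beta>\<^sup>2 < \<alpha> * \<gamma>"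
  shows "(\<alpha> * \<gamma> - \<beta>\<^sup>2) * (x\<^sup>2 + y\<^sup>2) \<le> (\<alpha> + \<gamma>) * (\<alpha> * x\<^sup>2 + 2 * \<beta> * x * y + \<gamma> * y\<^sup>2)"
proof -
  have "(\<alpha> + \<gamma>) * (\<alpha> * x\<^sup>2 + 2 * \<beta> * x * y + \<gamma> * y\<^sup>2) =
      (\<alpha> * x + \<beta> * y)\<^sup>2 + (\<gamma> * y + \<beta> * x)\<^sup>2 + (\<alpha> * \<gamma> - \<beta>\<^sup>2) * (x\<^sup>2 + y\<^sup>2)"
    by (simp add: power2_eq_square algebra_simps)
  then show ?thesis
    by simp
qed

lemma quadratic_form_upper_bound:
  fixes \<alpha> \<beta> \<gamma> x y :: real
  assumes "\<alpha> > 0" and "\<beta>\<^sup>2 < \<alpha> * \<gamma>"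
  shows "\<alpha> * x\<^sup>2 + 2 * \<beta> * x * y + \<gamma> * y\<^sup>2 \<le> 2 * (\<alpha> + \<gamma>) * (x\<^sup>2 + y\<^sup>2)"
proof -
  have "\<gamma> > 0"
    using assms by (smt (verit) mult_nonneg_nonpos zero_le_power2)
  have "0 \<le> (\<alpha> * \<gamma> - (- \<beta>)\<^sup>2) * (x\<^sup>2 + y\<^sup>2)"
    using assms by simp
  also have "\<dots> \<le> (\<alpha> + \<gamma>) * (\<alpha> * x\<^sup>2 + 2 * (- \<beta>) * x * y + \<gamma> * y\<^sup>2)"
    using assms by (intro quadratic_form_lower_bound) simp_all
  finally have "2 * \<beta> * x * y \<le> \<alpha> * x\<^sup>2 + \<gamma> * y\<^sup>2"
    using \<open>\<alpha> > 0\<close> \<open>\<gamma> > 0\<close> by (simp add: zero_le_mult_iff)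
  moreover have "0 \<le> \<alpha> * y\<^sup>2" and "0 \<le> \<gamma> * x\<^sup>2"
    using \<open>\<alpha> > 0\<close> \<open>\<gamma> > 0\<close> by simp_all
  ultimately show ?thesis
    by (simp add: algebra_simps)
qed

lemma stable_map_if_invariant_form:
  fixes f :: "real \<times> real \<Rightarrow> real \<times> real" and Q :: "real \<times> real \<Rightarrow> real"
  assumes invariant: "\<And>z. Q (f z) = Q z"
    and "m > 0"
    and lower: "\<And>z. m * (norm z)\<^sup>2 \<le> Q z"
    and upper: "\<And>z. Q z \<le> M * (norm z)\<^sup>2"
  shows "stable_map f"
  unfolding stable_map_def
proof (intro exI allI)
  fix n z
  have "M \<ge> m"
    using lower[of "(1, 0)"] upper[of "(1, 0)"] by simp
  have "Q ((f ^^ n) z) = Q z"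
    by (induction n) (simp_all add: invariant)
  then have "m * (norm ((f ^^ n) z))\<^sup>2 \<le> M * (norm z)\<^sup>2"
    using lower upper by (metis order_trans)
  then have "(norm ((f ^^ n) z))\<^sup>2 \<le> (sqrt (M / m) * norm z)\<^sup>2"
    using \<open>m > 0\<close> \<open>M \<ge> m\<close> by (simp add: power_mult_distrib field_simps)
  then show "norm ((f ^^ n) z) \<le> sqrt (M / m) * norm z"
    by (rule power2_le_imp_le) (use \<open>m > 0\<close> \<open>M \<ge> m\<close> in simp)
qed

lemma mat2_preserves_form:
  fixes a b c d x y :: real
  assumes "a * d - b * c = 1"
  shows "c * (a * x + b * y)\<^sup>2 + (d - a) * (a * x + b * y) * (c * x + d * y) - b * (c * x + d * y)\<^sup>2
       = c * x\<^sup>2 + (d - a) * x * y - b * y\<^sup>2"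
proof -
  have "c * (a * x + b * y)\<^sup>2 + (d - a) * (a * x + b * y) * (c * x + d * y) - b * (c * x + d * y)\<^sup>2
      = (a * d - b * c) * (c * x\<^sup>2 + (d - a) * x * y - b * y\<^sup>2)"
    by (simp add: power2_eq_square algebra_simps)
  then show ?thesis
    using assms by simp
qed

text \<open>The invariant form is the symmetric part of J A, J the standard symplectic matrix; it is
  definite because its discriminant (d - a)^2 + 4 b c equals (a + d)^2 - 4.\<close>
lemma mat2_stable:
  assumes det: "a * d - b * c = 1" and trace: "\<bar>a + d\<bar> < 2"
  shows "stable_map (mat2 a b c d)"
proof -
  have "(a + d)\<^sup>2 < 2\<^sup>2"
    using trace by (metis power2_abs abs_ge_zero power_strict_mono zero_less_numeral)
  then have discr: "(d - a)\<^sup>2 + 4 * b * c < 0"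
    using det by (simp add: power2_eq_square algebra_simps)
  then have "c \<noteq> 0"
    by (cases "c = 0") simp_all
  define \<alpha> where "\<alpha> = sgn c * c"
  define \<beta> where "\<beta> = sgn c * (d - a) / 2"
  define \<gamma> where "\<gamma> = - sgn c * b"
  define Q where "Q = (\<lambda>(x, y). \<alpha> * x\<^sup>2 + 2 * \<beta> * x * y + \<gamma> * y\<^sup>2)"
  have "sgn c * sgn c = 1"
    using \<open>c \<noteq> 0\<close> by (simp add: sgn_if)
  moreover have "\<alpha> * \<gamma> - \<beta>\<^sup>2 = (sgn c * sgn c) * (- ((d - a)\<^sup>2 + 4 * b * c) / 4)"
    unfolding \<alpha>_def \<beta>_def \<gamma>_def by (simp add: power2_eq_square field_simps)
  ultimately have definite: "\<beta>\<^sup>2 < \<alpha> * \<gamma>"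
    using discr by simp
  have "\<alpha> > 0"
    using \<open>c \<noteq> 0\<close> by (simp add: \<alpha>_def sgn_if)
  have "\<alpha> + \<gamma> > 0"
    using \<open>\<alpha> > 0\<close> definite by (smt (verit) mult_nonneg_nonpos zero_le_power2)
  have Q_eq: "Q (x, y) = sgn c * (c * x\<^sup>2 + (d - a) * x * y - b * y\<^sup>2)" for x y
    by (simp add: Q_def \<alpha>_def \<beta>_def \<gamma>_def field_simps)
  have norm_sq: "(norm z)\<^sup>2 = (fst z)\<^sup>2 + (snd z)\<^sup>2" for z :: "real \<times> real"
    by (simp add: norm_Pair norm_prod_def)
  show ?thesis
  proof (rule stable_map_if_invariant_form)
    show "Q (mat2 a b c d z) = Q z" for z
      using mat2_preserves_form[OF det] by (cases z) (simp add: mat2_def Q_eq)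
    show "(\<alpha> * \<gamma> - \<beta>\<^sup>2) / (\<alpha> + \<gamma>) * (norm z)\<^sup>2 \<le> Q z" for z
      using quadratic_form_lower_bound[OF \<open>\<alpha> > 0\<close> definite, of "fst z" "snd z"] \<open>\<alpha> + \<gamma> > 0\<close>
      by (cases z) (simp add: Q_def norm_sq divide_le_eq mult.commute)
    show "Q z \<le> 2 * (\<alpha> + \<gamma>) * (norm z)\<^sup>2" for z
      using quadratic_form_upper_bound[OF \<open>\<alpha> > 0\<close> definite, of "fst z" "snd z"]
      by (cases z) (simp add: Q_def norm_sq)
    show "(\<alpha> * \<gamma> - \<beta>\<^sup>2) / (\<alpha> + \<gamma>) > 0"
      using \<open>\<alpha> + \<gamma> > 0\<close> definite by simp
  qed
qed

lemma has_vector_derivative_PairD: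
  fixes f :: "real \<Rightarrow> real \<times> real"
  assumes "(f has_vector_derivative (v, w)) F"
  shows "((\<lambda>s. fst (f s)) has_real_derivative v) F"
    and "((\<lambda>s. snd (f s)) has_real_derivative w) F"
  using bounded_linear.has_vector_derivative[OF bounded_linear_fst assms]
    bounded_linear.has_vector_derivative[OF bounded_linear_snd assms]
  by (simp_all add: has_real_derivative_iff_has_vector_derivative)

definition oscillator_field :: "real \<Rightarrow> real \<Rightarrow> real \<times> real \<Rightarrow> real \<times> real" where
  "oscillator_field b g = (\<lambda>(q, p). (b * p, - g * q))"

lemma field_A_eq_oscillator_field: "field_A \<omega> c = oscillator_field (1 / \<omega>\<^sup>2) (c\<^sup>2 * \<omega>\<^sup>2)"
  by (auto simp: field_A_def oscillator_field_def)

lemma field_B_eq_oscillator_field: "field_B \<omega> c = oscillator_field 0 ((1 - c\<^sup>2) * \<omega>\<^sup>2 + 1)"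
  by (auto simp: field_B_def oscillator_field_def)

lemma oscillator_solution_eq_0:
  fixes u v :: "real \<Rightarrow> real"
  assumes "b \<ge> 0" and "g \<ge> 0"
    and du: "\<And>t. (u has_real_derivative b * v t) (at t)"
    and dv: "\<And>t. (v has_real_derivative - g * u t) (at t)"
    and "u 0 = 0" and "v 0 = 0"
  shows "u t = 0 \<and> v t = 0"
proof -
  have const_at: "f s = f 0" if "\<And>t. (f has_real_derivative 0) (at t)" for f :: "real \<Rightarrow> real" and s
    using DERIV_isconst_all that by blast
  consider "b = 0" | "g = 0" | "b > 0" "g > 0"
    using assms by linarith
  then show ?thesis
  proof cases
    case 1
    then have "u t = 0" for t
      using const_at[of u] du \<open>u 0 = 0\<close> by simp
    then show ?thesis
      using const_at[of v] dv \<open>v 0 = 0\<close> by simp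
  next
    case 2
    then have "v t = 0" for t
      using const_at[of v] dv \<open>v 0 = 0\<close> by simp
    then show ?thesis
      using const_at[of u] du \<open>u 0 = 0\<close> by simp
  next
    case 3
    have "((\<lambda>s. g * (u s)\<^sup>2 + b * (v s)\<^sup>2) has_real_derivative 0) (at s)" for s
      by (auto intro!: derivative_eq_intros du dv simp: algebra_simps)
    then have "g * (u t)\<^sup>2 + b * (v t)\<^sup>2 = 0"
      using const_at \<open>u 0 = 0\<close> \<open>v 0 = 0\<close> by fastforce
    moreover have "0 \<le> g * (u t)\<^sup>2" and "0 \<le> b * (v t)\<^sup>2"
      using 3 by simp_all
    ultimately show ?thesis
      using 3 by (simp add: add_nonneg_eq_0_iff)
  qed
qed

lemma oscillator_flow_eq:
  assumes flow: "is_flow phi (oscillator_field b g)" and "b \<ge> 0" and "g \<ge> 0"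
    and dQ: "\<And>t. (Q has_real_derivative b * P t) (at t)"
    and dP: "\<And>t. (P has_real_derivative - g * Q t) (at t)"
  shows "phi t (Q 0, P 0) = (Q t, P t)"
proof -
  define x where "x = (Q 0, P 0)"
  have "((\<lambda>s. phi s x) has_vector_derivative
           (b * snd (phi t x), - g * fst (phi t x))) (at t)" for t
    using flow unfolding is_flow_def oscillator_field_def case_prod_beta by blast
  note component_derivatives = has_vector_derivative_PairD[OF this]
  have "fst (phi t x) - Q t = 0 \<and> snd (phi t x) - P t = 0"
  proof (rule oscillator_solution_eq_0[OF \<open>b \<ge> 0\<close> \<open>g \<ge> 0\<close>,
        where u = "\<lambda>s. fst (phi s x) - Q s" and v = "\<lambda>s. snd (phi s x) - P s"])
    show "((\<lambda>s. fst (phi s x) - Q s) has_real_derivative b * (snd (phi t x) - P t)) (at t)" for t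
      using DERIV_diff[OF component_derivatives(1)[of t] dQ[of t]] by (simp add: right_diff_distrib)
    show "((\<lambda>s. snd (phi s x) - P s) has_real_derivative - g * (fst (phi t x) - Q t)) (at t)" for t
      using DERIV_diff[OF component_derivatives(2)[of t] dP[of t]] by (simp add: right_diff_distrib)
  qed (use flow in \<open>simp_all add: is_flow_def x_def\<close>)
  then show ?thesis
    unfolding x_def by (simp add: prod_eq_iff)
qed

lemma flow_B_eq:
  assumes "is_flow phi (field_B \<omega> c)" and "c\<^sup>2 \<le> 1"
  shows "phi t = mat2 1 0 (- ((1 - c\<^sup>2) * \<omega>\<^sup>2 + 1) * t) 1"
proof (rule ext, clarify)
  fix q p
  define k where "k = (1 - c\<^sup>2) * \<omega>\<^sup>2 + 1"
  have "k \<ge> 0"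
    using assms(2) by (simp add: k_def)
  have "is_flow phi (oscillator_field 0 k)"
    using assms(1) by (simp add: field_B_eq_oscillator_field k_def)
  moreover have "((\<lambda>s. p - k * s * q) has_real_derivative - k * q) (at s)" for s
    by (auto intro!: derivative_eq_intros)
  ultimately have "phi t (q, p) = (q, p - k * t * q)"
    using oscillator_flow_eq[of phi 0 k "\<lambda>s. q" "\<lambda>s. p - k * s * q" t] \<open>k \<ge> 0\<close> by simp
  then show "phi t (q, p) = mat2 1 0 (- k * t) 1 (q, p)"
    by (simp add: mat2_def algebra_simps)
qed

lemma flow_A_free_eq:
  assumes "is_flow phi (field_A \<omega> 0)"
  shows "phi t = mat2 1 (t / \<omega>\<^sup>2) 0 1"
proof (rule ext, clarify)
  fix q p
  have "is_flow phi (oscillator_field (1 / \<omega>\<^sup>2) 0)"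
    using assms by (simp add: field_A_eq_oscillator_field)
  moreover have "((\<lambda>s. q + p / \<omega>\<^sup>2 * s) has_real_derivative 0 + p / \<omega>\<^sup>2 * 1) (at s)" for s
    by (intro DERIV_add DERIV_const DERIV_cmult DERIV_ident)
  ultimately have "phi t (q, p) = (q + p / \<omega>\<^sup>2 * t, p)"
    using oscillator_flow_eq[of phi "1 / \<omega>\<^sup>2" 0 "\<lambda>s. q + p / \<omega>\<^sup>2 * s" "\<lambda>s. p" t] by simp
  then show "phi t (q, p) = mat2 1 (t / \<omega>\<^sup>2) 0 1 (q, p)"
    by (simp add: mat2_def)
qed

lemma flow_A_rotation_eq:
  assumes "is_flow phi (field_A \<omega> c)" and "\<omega> \<noteq> 0" and "c \<noteq> 0"
  shows "phi t = mat2 (cos (c * t)) (sin (c * t) / (\<omega>\<^sup>2 * c)) (- \<omega>\<^sup>2 * c * sin (c * t)) (cos (c * t))"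
proof (rule ext, clarify)
  fix q p
  define Q where "Q s = q * cos (c * s) + p / (\<omega>\<^sup>2 * c) * sin (c * s)" for s
  define P where "P s = - \<omega>\<^sup>2 * c * q * sin (c * s) + p * cos (c * s)" for s
  have "is_flow phi (oscillator_field (1 / \<omega>\<^sup>2) (c\<^sup>2 * \<omega>\<^sup>2))"
    using assms(1) by (simp add: field_A_eq_oscillator_field)
  moreover have "(Q has_real_derivative 1 / \<omega>\<^sup>2 * P s) (at s)" for s
    unfolding Q_def P_def using assms(2,3)
    by (auto intro!: derivative_eq_intros simp: field_simps)
  moreover have "(P has_real_derivative - (c\<^sup>2 * \<omega>\<^sup>2) * Q s) (at s)" for s
    unfolding Q_def P_def using assms(2,3)
    by (auto intro!: derivative_eq_intros simp: field_simps power2_eq_square)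
  ultimately have "phi t (Q 0, P 0) = (Q t, P t)"
    using oscillator_flow_eq[of phi "1 / \<omega>\<^sup>2" "c\<^sup>2 * \<omega>\<^sup>2" Q P t] by simp
  then show "phi t (q, p) = mat2 (cos (c * t)) (sin (c * t) / (\<omega>\<^sup>2 * c))
      (- \<omega>\<^sup>2 * c * sin (c * t)) (cos (c * t)) (q, p)"
    by (simp add: Q_def P_def mat2_def algebra_simps)
qed

lemma kick_drift_kick_stable:
  assumes "a * d - b * c = 1" and "\<bar>a + d - 2 * \<kappa> * b\<bar> < 2"
  shows "stable_map (mat2 1 0 (- \<kappa>) 1 \<circ> mat2 a b c d \<circ> mat2 1 0 (- \<kappa>) 1)"
proof -
  have "mat2 1 0 (- \<kappa>) 1 \<circ> mat2 a b c d \<circ> mat2 1 0 (- \<kappa>) 1 =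
      mat2 (a - \<kappa> * b) b (c - \<kappa> * a - \<kappa> * d + \<kappa>\<^sup>2 * b) (d - \<kappa> * b)"
    by (simp add: mat2_comp power2_eq_square algebra_simps)
  moreover have "(a - \<kappa> * b) * (d - \<kappa> * b) - b * (c - \<kappa> * a - \<kappa> * d + \<kappa>\<^sup>2 * b) = 1"
    using assms(1) by (simp add: power2_eq_square algebra_simps)
  ultimately show ?thesis
    using assms(2) mat2_stable by (simp add: algebra_simps)
qed

lemma abs_cos_minus_mult_sin_less_1:
  fixes \<theta> \<tau> :: real
  assumes "\<theta> > 0" and "\<tau> > 0" and "\<theta> + 2 * arctan \<tau> < pi"
  shows "\<bar>cos \<theta> - \<tau> * sin \<theta>\<bar> < 1"
proof -
  define \<phi> where "\<phi> = arctan \<tau>"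
  have "0 < \<phi>" and "\<phi> < pi / 2"
    using \<open>\<tau> > 0\<close> arctan_bounded by (simp_all add: \<phi>_def zero_less_arctan_iff)
  then have "cos \<phi> > 0"
    by (intro cos_gt_zero) simp_all
  have "\<theta> + 2 * \<phi> < pi"
    using assms(3) by (simp add: \<phi>_def)
  have "\<tau> = sin \<phi> / cos \<phi>"
    unfolding \<phi>_def by (metis tan_arctan tan_def)
  then have "cos \<theta> - \<tau> * sin \<theta> = cos (\<theta> + \<phi>) / cos \<phi>"
    using \<open>cos \<phi> > 0\<close> by (simp add: cos_add field_simps)
  moreover have "cos (\<theta> + \<phi>) < cos \<phi>"
    using \<open>\<theta> > 0\<close> \<open>0 < \<phi>\<close> \<open>\<theta> + 2 * \<phi> < pi\<close> by (subst cos_mono_less_eq) auto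
  moreover have "cos (pi - \<phi>) < cos (\<theta> + \<phi>)"
    using \<open>\<theta> > 0\<close> \<open>0 < \<phi>\<close> \<open>\<theta> + 2 * \<phi> < pi\<close> by (subst cos_mono_less_eq) auto
  ultimately show ?thesis
    using \<open>cos \<phi> > 0\<close> by (simp add: abs_less_iff divide_less_eq less_divide_eq)
qed

lemma abs_two_minus_step_size_ratio_less_2:
  fixes \<omega> h :: real
  assumes "\<omega> > 0" and "h > 0" and "h < 2 * \<omega> / sqrt (1 + \<omega>\<^sup>2)"
  shows "\<bar>2 - h\<^sup>2 * (1 + \<omega>\<^sup>2) / \<omega>\<^sup>2\<bar> < 2"
proof -
  have "h * sqrt (1 + \<omega>\<^sup>2) < 2 * \<omega>"
    using assms(3) by (simp add: less_divide_eq add_pos_nonneg)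
  then have "(h * sqrt (1 + \<omega>\<^sup>2))\<^sup>2 < (2 * \<omega>)\<^sup>2"
    using assms(2) by (intro power_strict_mono) simp_all
  then have "h\<^sup>2 * (1 + \<omega>\<^sup>2) / \<omega>\<^sup>2 < 4"
    using assms(1) by (simp add: power_mult_distrib divide_less_eq)
  moreover have "0 < h\<^sup>2 * (1 + \<omega>\<^sup>2) / \<omega>\<^sup>2"
    using assms(1,2) by (simp add: add_pos_nonneg)
  ultimately show ?thesis
    by linarith
qed

theorem proposition9p2:
  fixes \<omega> c h :: real
    and phiA phiB :: "real \<Rightarrow> real \<times> real \<Rightarrow> real \<times> real"
  assumes "\<omega> > 0" and "0 \<le> c" and "c \<le> 1"
    and "is_flow phiA (field_A \<omega> c)"
    and "is_flow phiB (field_B \<omega> c)"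
    and "h > 0"
    and "c > 0 \<Longrightarrow> c * h + 2 * arctan (h * (1 + (1 - c\<^sup>2) * \<omega>\<^sup>2) / (2 * c * \<omega>\<^sup>2)) < pi"
    and "c = 0 \<Longrightarrow> h < 2 * \<omega> / sqrt (1 + \<omega>\<^sup>2)"
  shows "stable_map (strang phiA phiB h)"
proof -
  define \<kappa> where "\<kappa> = ((1 - c\<^sup>2) * \<omega>\<^sup>2 + 1) * h / 2"
  have "c\<^sup>2 \<le> 1"
    using assms(2,3) by (simp add: power_le_one)
  then have "phiB (h / 2) = mat2 1 0 (- \<kappa>) 1"
    using flow_B_eq[OF assms(5) \<open>c\<^sup>2 \<le> 1\<close>, of "h / 2"]
    by (simp only: \<kappa>_def mult_minus_left times_divide_eq_right minus_divide_left)
  then have strang_eq: "strang phiA phiB h = mat2 1 0 (- \<kappa>) 1 \<circ> phiA h \<circ> mat2 1 0 (- \<kappa>) 1"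
    by (simp add: strang_def)
  show ?thesis
  proof (cases "c = 0")
    case True
    have "1 + 1 - 2 * \<kappa> * (h / \<omega>\<^sup>2) = 2 - h\<^sup>2 * (1 + \<omega>\<^sup>2) / \<omega>\<^sup>2"
      using True assms(1) by (simp add: \<kappa>_def power2_eq_square field_simps)
    then have "\<bar>1 + 1 - 2 * \<kappa> * (h / \<omega>\<^sup>2)\<bar> < 2"
      using abs_two_minus_step_size_ratio_less_2 assms(1,6,8) True by simp
    then show ?thesis
      using assms(4) True by (simp add: strang_eq flow_A_free_eq kick_drift_kick_stable)
  next
    case False
    define \<tau> where "\<tau> = h * (1 + (1 - c\<^sup>2) * \<omega>\<^sup>2) / (2 * c * \<omega>\<^sup>2)"
    have "c > 0" and "\<tau> > 0"
      using assms(1,2,6) False \<open>c\<^sup>2 \<le> 1\<close> by (simp_all add: \<tau>_def add_pos_nonneg)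
    then have "\<bar>cos (c * h) - \<tau> * sin (c * h)\<bar> < 1"
      using assms(6,7) by (intro abs_cos_minus_mult_sin_less_1) (simp_all add: \<tau>_def)
    then have "\<bar>cos (c * h) + cos (c * h) - 2 * \<kappa> * (sin (c * h) / (\<omega>\<^sup>2 * c))\<bar> < 2"
      using assms(1) \<open>c > 0\<close> by (simp add: \<kappa>_def \<tau>_def field_simps)
    moreover have "cos (c * h) * cos (c * h) - sin (c * h) / (\<omega>\<^sup>2 * c) * (- \<omega>\<^sup>2 * c * sin (c * h)) = 1"
      using assms(1) \<open>c > 0\<close> by (simp add: field_simps flip: power2_eq_square)
    ultimately show ?thesis
      using assms(1,4) \<open>c > 0\<close> by (simp add: strang_eq flow_A_rotation_eq kick_drift_kick_stable)
  qed
qed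

end
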